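(* Let $g_1,\dots,g_n$ be real-analytic functions of $(x^1,\dots,x^n)$ on a connected open set such that for all pairwise distinct $i,j,k$ $$\frac{\partial g_i}{\partial x^j}\frac{\partial g_k}{\partial x^i}+\frac{\partial g_k}{\partial x^j}\frac{\partial g_j}{\partial x^i}-\frac{\partial g_k}{\partial x^j}\frac{\partial g_k}{\partial x^i}=0.$$ Define a relation on $\{1,\dots,n\}$ by $i\preccurlyeq j$ iff $i=j$ or $g_j$ depends on $x^i$ (i.e. $\partial g_j/\partial x^i\not\equiv0$). Then $\preccurlyeq$ is transitive (if $i\preccurlyeq j$ and $j\preccurlyeq k$ then $i\preccurlyeq k$), and for every $k$ any two elements $i,j$ of $\operatorname{Less}_k=\{i: i\preccurlyeq k\}$ satisfy $i\preccurlyeq j$ or $j\preccurlyeq i$. *)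

theory Defs
  imports "HOL-Analysis.Analysis"
begin

text \<open>Real-analytic functions on a subset of R^n (index type 'n): near every point
  of U the function is the sum of an (unconditionally, i.e. absolutely) convergent
  multivariate power series centred at that point.\<close>
definition real_analytic_on :: "(real^'n::finite \<Rightarrow> real) \<Rightarrow> (real^'n) set \<Rightarrow> bool" where
  "real_analytic_on f U \<longleftrightarrow>
     (\<forall>a\<in>U. \<exists>r>0. \<exists>c :: ('n \<Rightarrow> nat) \<Rightarrow> real.
        \<forall>x\<in>ball a r.
          ((\<lambda>\<alpha>. c \<alpha> * (\<Prod>i\<in>UNIV. (x $ i - a $ i) ^ \<alpha> i)) has_sum f x) UNIV)"

definition partial :: "(real^'n::finite \<Rightarrow> real) \<Rightarrow> 'n \<Rightarrow> real^'n \<Rightarrow> real" where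
  "partial f j x = deriv (\<lambda>t. f (x + t *\<^sub>R axis j 1)) 0"

definition dep_rel :: "('n::finite \<Rightarrow> real^'n \<Rightarrow> real) \<Rightarrow> (real^'n) set \<Rightarrow> 'n \<Rightarrow> 'n \<Rightarrow> bool" where
  "dep_rel g U i j \<longleftrightarrow> i = j \<or> (\<exists>x\<in>U. partial (g j) i x \<noteq> 0)"

end

theory Submission
  imports Defs "HOL-Complex_Analysis.Cauchy_Integral_Formula"
begin

text \<open>If \<open>i \<preccurlyeq> j \<preccurlyeq> k\<close> with \<open>i, j, k\<close> distinct but \<open>g\<^sub>k\<close> does not depend on \<open>x\<^sup>i\<close>, the
  hypothesis collapses to \<open>\<partial>\<^sub>jg\<^sub>k \<cdot> \<partial>\<^sub>ig\<^sub>j \<equiv> 0\<close>; if \<open>i, j \<preccurlyeq> k\<close> are incomparable it collapses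
  to \<open>\<partial>\<^sub>jg\<^sub>k \<cdot> \<partial>\<^sub>ig\<^sub>k \<equiv> 0\<close>. Partial derivatives of real-analytic functions are real-analytic,
  and on a connected open set a product of real-analytic functions vanishes identically only
  if a factor does, which contradicts the assumed dependencies in both cases.

  Both analytic facts come from local power series expansions on polydiscs: differentiating
  termwise gives the first; for the second, restricting an expansion to lines through the
  centre shows that a function vanishing near the centre vanishes on the whole polydisc, and
  re-expanding about nearby points propagates the vanishing through the connected set.\<close>

definition multipower :: "real^'n::finite \<Rightarrow> ('n \<Rightarrow> nat) \<Rightarrow> real" where
  "multipower u \<alpha> = (\<Prod>i\<in>UNIV. (u $ i) ^ \<alpha> i)"

definition multichoose :: "('n::finite \<Rightarrow> nat) \<Rightarrow> ('n \<Rightarrow> nat) \<Rightarrow> real" where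
  "multichoose \<alpha> \<beta> = (\<Prod>i\<in>UNIV. of_nat (\<alpha> i choose \<beta> i))"

definition total_degree :: "('n::finite \<Rightarrow> nat) \<Rightarrow> nat" where
  "total_degree \<alpha> = (\<Sum>i\<in>UNIV. \<alpha> i)"

lemma multipower_abs: "\<bar>multipower u \<alpha>\<bar> = multipower (\<chi> i. \<bar>u $ i\<bar>) \<alpha>"
  by (simp add: multipower_def abs_prod power_abs)

lemma multipower_const: "multipower (\<chi> i. r) \<alpha> = r ^ total_degree \<alpha>"
  by (simp add: multipower_def total_degree_def power_sum)

lemma multipower_scaleR: "multipower (t *\<^sub>R v) \<alpha> = t ^ total_degree \<alpha> * multipower v \<alpha>"
  by (simp add: multipower_def total_degree_def power_sum power_mult_distrib prod.distrib)

lemma multipower_zero: "multipower 0 \<alpha> = (if \<alpha> = (\<lambda>_. 0) then 1 else 0)"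
  by (auto simp: multipower_def fun_eq_iff power_0_left)

lemma multipower_mono: "(\<And>i. 0 \<le> u $ i \<and> u $ i \<le> v $ i) \<Longrightarrow> multipower u \<alpha> \<le> multipower v \<alpha>"
  unfolding multipower_def by (intro prod_mono) (auto intro: power_mono)

lemma multipower_nonneg: "(\<And>i. 0 \<le> u $ i) \<Longrightarrow> 0 \<le> multipower u \<alpha>"
  unfolding multipower_def by (intro prod_nonneg) auto

lemma abs_multipower_le: "(\<And>i. \<bar>u $ i\<bar> \<le> r) \<Longrightarrow> \<bar>multipower u \<alpha>\<bar> \<le> r ^ total_degree \<alpha>"
  unfolding multipower_abs multipower_const[symmetric] by (intro multipower_mono) auto

lemma multipower_axis:
  fixes j :: "'n::finite"
  shows "multipower (t *\<^sub>R axis j 1) \<alpha> = (if \<forall>i. i \<noteq> j \<longrightarrow> \<alpha> i = 0 then t ^ \<alpha> j else 0)"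
proof -
  have "multipower (t *\<^sub>R axis j 1) \<alpha> = (\<Prod>i\<in>UNIV. (if i = j then t else 0) ^ \<alpha> i)"
    unfolding multipower_def by (intro prod.cong) (auto simp: axis_def)
  also have "\<dots> = t ^ \<alpha> j * (\<Prod>i\<in>UNIV-{j}. (if i = j then t else 0) ^ \<alpha> i)"
    by (subst prod.remove[of UNIV j]) auto
  also have "(\<Prod>i\<in>UNIV-{j}. (if i = j then t else 0) ^ \<alpha> i) = (\<Prod>i\<in>UNIV-{j}. (0::real) ^ \<alpha> i)"
    by (intro prod.cong) auto
  also have "\<dots> = (if \<forall>i. i \<noteq> j \<longrightarrow> \<alpha> i = 0 then 1 else 0)"
    by (auto simp: power_0_left prod_zero_iff)
  finally show ?thesis by auto
qed

lemma multichoose_nonneg: "0 \<le> multichoose \<alpha> \<beta>"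
  unfolding multichoose_def by (intro prod_nonneg) auto

lemma multichoose_unit: "multichoose \<alpha> ((\<lambda>_. 0)(j := 1)) = of_nat (\<alpha> j)"
proof -
  have "multichoose \<alpha> ((\<lambda>_. 0)(j := 1)) = (\<Prod>i\<in>UNIV. if i = j then of_nat (\<alpha> j) else 1)"
    unfolding multichoose_def by (intro prod.cong) auto
  thus ?thesis by simp
qed

lemma has_sum_multi_binomial:
  fixes p q :: "real^'n::finite"
  shows "((\<lambda>\<beta>. multichoose \<alpha> \<beta> * multipower p \<beta> * multipower q (\<alpha> - \<beta>))
            has_sum multipower (p + q) \<alpha>) UNIV"
proof (rule has_sum_finite_neutralI)
  let ?S = "PiE UNIV (\<lambda>i. {..\<alpha> i})"
  show "finite ?S" by (simp add: finite_PiE)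
  show "?S \<subseteq> UNIV" by simp
  show "multichoose \<alpha> \<beta> * multipower p \<beta> * multipower q (\<alpha> - \<beta>) = 0" if "\<beta> \<in> UNIV - ?S" for \<beta>
  proof -
    from that obtain i where "\<beta> i > \<alpha> i" by (auto simp: PiE_def Pi_def not_le)
    thus ?thesis unfolding multichoose_def by (simp add: prod_zero_iff) blast
  qed
  have "multipower (p + q) \<alpha> =
          (\<Prod>i\<in>UNIV. \<Sum>k\<le>\<alpha> i. of_nat (\<alpha> i choose k) * p$i ^ k * q$i ^ (\<alpha> i - k))"
    unfolding multipower_def by (simp add: binomial_ring)
  also have "\<dots> = (\<Sum>\<beta>\<in>?S. \<Prod>i\<in>UNIV. of_nat (\<alpha> i choose \<beta> i) * p$i ^ \<beta> i * q$i ^ (\<alpha> i - \<beta> i))"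
    by (rule prod_sum_PiE) auto
  also have "\<dots> = (\<Sum>\<beta>\<in>?S. multichoose \<alpha> \<beta> * multipower p \<beta> * multipower q (\<alpha> - \<beta>))"
    by (simp add: multichoose_def multipower_def prod.distrib)
  finally show "multipower (p + q) \<alpha> =
      (\<Sum>\<beta>\<in>?S. multichoose \<alpha> \<beta> * multipower p \<beta> * multipower q (\<alpha> - \<beta>))" .
qed

lemma le_total_degree: "\<gamma> j \<le> total_degree \<gamma>"
  unfolding total_degree_def by (rule member_le_sum) auto

lemma total_degree_eq_0_iff: "total_degree \<alpha> = 0 \<longleftrightarrow> \<alpha> = (\<lambda>_. 0)"
  unfolding total_degree_def by (auto simp: fun_eq_iff)

lemma total_degree_Suc_upd: "total_degree (\<gamma>(j := Suc (\<gamma> j))) = Suc (total_degree \<gamma>)"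
proof -
  have "\<gamma>(j := Suc (\<gamma> j)) = (\<lambda>i. \<gamma> i + (if i = j then 1 else 0))" by auto
  thus ?thesis unfolding total_degree_def by (simp add: sum.distrib)
qed

lemma finite_total_degree_eq: "finite {\<alpha> :: 'n::finite \<Rightarrow> nat. total_degree \<alpha> = n}"
proof (rule finite_subset)
  show "{\<alpha> :: 'n \<Rightarrow> nat. total_degree \<alpha> = n} \<subseteq> PiE UNIV (\<lambda>_. {..n})"
    using le_total_degree by (auto simp: PiE_def Pi_def)
qed (simp add: finite_PiE)

lemma has_sum_swap_abs_summable:
  fixes F :: "'a \<Rightarrow> 'b \<Rightarrow> real"
  assumes abs_rows: "\<And>a. ((\<lambda>b. \<bar>F a b\<bar>) has_sum A a) UNIV" and A: "A summable_on UNIV"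
  shows "((\<lambda>b. \<Sum>\<^sub>\<infinity>a. F a b) has_sum (\<Sum>\<^sub>\<infinity>a. \<Sum>\<^sub>\<infinity>b. F a b)) UNIV"
    and "\<And>b. (\<lambda>a. F a b) summable_on UNIV"
    and "(\<lambda>b. \<bar>\<Sum>\<^sub>\<infinity>a. F a b\<bar>) summable_on UNIV"
proof -
  have G: "(\<lambda>(a,b). \<bar>F a b\<bar>) summable_on Sigma UNIV (\<lambda>_. UNIV)"
    by (rule summable_on_SigmaI[where g=A]) (use abs_rows A in simp_all)
  hence "(\<lambda>x. norm ((\<lambda>(a,b). F a b) x)) summable_on UNIV"
    by (simp add: case_prod_unfold)
  hence F: "(\<lambda>(a,b). F a b) summable_on UNIV"
    by (rule abs_summable_summable)
  hence F_swap: "(\<lambda>(b,a). F a b) summable_on UNIV"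
    using summable_on_swap[of "\<lambda>(a,b). F a b" UNIV UNIV] by simp
  show cols: "\<And>b. (\<lambda>a. F a b) summable_on UNIV"
    using summable_on_SigmaD1[of "\<lambda>b a. F a b" UNIV "\<lambda>_. UNIV"] F_swap by simp
  have rows: "\<And>a. F a summable_on UNIV"
    using summable_on_SigmaD1[of "\<lambda>a b. F a b" UNIV "\<lambda>_. UNIV"] F by simp
  define T where "T = (\<Sum>\<^sub>\<infinity>(a,b). F a b)"
  have T: "((\<lambda>(a,b). F a b) has_sum T) (Sigma UNIV (\<lambda>_. UNIV))"
    using F T_def by (simp add: has_sum_infsum)
  have "((\<lambda>a. \<Sum>\<^sub>\<infinity>b. F a b) has_sum T) UNIV"
    by (rule has_sum_SigmaD[OF T]) (use has_sum_infsum[OF rows] in simp)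
  hence "T = (\<Sum>\<^sub>\<infinity>a. \<Sum>\<^sub>\<infinity>b. F a b)" by (simp add: infsumI)
  moreover have "((\<lambda>(b,a). F a b) has_sum T) (Sigma UNIV (\<lambda>_. UNIV))"
    using T has_sum_swap[where f="\<lambda>(a,b). F a b" and S=T and A=UNIV and B=UNIV] by simp
  hence "((\<lambda>b. \<Sum>\<^sub>\<infinity>a. F a b) has_sum T) UNIV"
    by (rule has_sum_SigmaD) (use has_sum_infsum[OF cols] in simp)
  ultimately show "((\<lambda>b. \<Sum>\<^sub>\<infinity>a. F a b) has_sum (\<Sum>\<^sub>\<infinity>a. \<Sum>\<^sub>\<infinity>b. F a b)) UNIV" by simp
  have abs_cols: "(\<lambda>a. \<bar>F a b\<bar>) summable_on UNIV" for b
    using cols[of b] summable_on_iff_abs_summable_on_real[of "\<lambda>a. F a b" UNIV] by simp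
  have "(\<lambda>(b,a). \<bar>F a b\<bar>) summable_on Sigma UNIV (\<lambda>_. UNIV)"
    using G summable_on_swap[of "\<lambda>(a,b). \<bar>F a b\<bar>" UNIV UNIV] by simp
  hence "(\<lambda>b. \<Sum>\<^sub>\<infinity>a. \<bar>F a b\<bar>) summable_on UNIV"
    using summable_on_SigmaD[of "\<lambda>(b,a). \<bar>F a b\<bar>" UNIV "\<lambda>_. UNIV"] abs_cols by simp
  thus "(\<lambda>b. \<bar>\<Sum>\<^sub>\<infinity>a. F a b\<bar>) summable_on UNIV"
  proof (rule summable_on_comparison_test)
    show "\<bar>\<Sum>\<^sub>\<infinity>a. F a b\<bar> \<le> (\<Sum>\<^sub>\<infinity>a. \<bar>F a b\<bar>)" for b
      using norm_infsum_le[OF has_sum_infsum[OF cols] has_sum_infsum[OF abs_cols]] by simp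
  qed simp
qed

definition polydisc :: "real^'n::finite \<Rightarrow> real \<Rightarrow> (real^'n) set" where
  "polydisc a r = {x. \<forall>i. \<bar>x $ i - a $ i\<bar> < r}"

lemma open_polydisc: "open (polydisc a r)"
proof -
  have "polydisc a r = (\<Inter>i\<in>UNIV. {x. \<bar>x $ i - a $ i\<bar> < r})" unfolding polydisc_def by auto
  moreover have "open {x::real^'a. \<bar>x $ i - a $ i\<bar> < r}" for i
    by (intro open_Collect_less continuous_intros)
  ultimately show ?thesis by auto
qed

lemma polydisc_mono: "r \<le> s \<Longrightarrow> polydisc a r \<subseteq> polydisc a s"
  unfolding polydisc_def by (auto intro: less_le_trans)

lemma ball_subset_polydisc: "ball a r \<subseteq> polydisc a r"
proof
  fix x assume "x \<in> ball a r"
  hence "norm (x - a) < r" by (simp add: dist_norm norm_minus_commute)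
  thus "x \<in> polydisc a r" unfolding polydisc_def
    using component_le_norm_cart[of "x - a"] by (auto intro: le_less_trans)
qed

lemma polydisc_subset_ball: "polydisc (a::real^'n::finite) r \<subseteq> ball a (real CARD('n) * r)"
proof
  fix x :: "real^'n" assume "x \<in> polydisc a r"
  hence "(\<Sum>i\<in>UNIV. \<bar>(x - a) $ i\<bar>) < (\<Sum>i\<in>(UNIV::'n set). r)"
    by (intro sum_strict_mono) (auto simp: polydisc_def)
  hence "norm (x - a) < real CARD('n) * r"
    using norm_le_l1_cart[of "x - a"] by simp
  thus "x \<in> ball a (real CARD('n) * r)" by (simp add: dist_norm norm_minus_commute)
qed

text \<open>Absolute convergence is demanded on the closed polydisc as well: this margin is what
  makes re-expansion about nearby points possible.\<close>
definition polydisc_expansion ::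
    "(real^'n::finite \<Rightarrow> real) \<Rightarrow> real^'n \<Rightarrow> real \<Rightarrow> (('n \<Rightarrow> nat) \<Rightarrow> real) \<Rightarrow> bool" where
  "polydisc_expansion f a \<rho> c \<longleftrightarrow> 0 < \<rho> \<and> (\<lambda>\<alpha>. \<bar>c \<alpha>\<bar> * \<rho> ^ total_degree \<alpha>) summable_on UNIV \<and>
     (\<forall>x\<in>polydisc a \<rho>. ((\<lambda>\<alpha>. c \<alpha> * multipower (x - a) \<alpha>) has_sum f x) UNIV)"

lemma polydisc_expansion_has_sum:
  "polydisc_expansion f a \<rho> c \<Longrightarrow> x \<in> polydisc a \<rho> \<Longrightarrow>
     ((\<lambda>\<alpha>. c \<alpha> * multipower (x - a) \<alpha>) has_sum f x) UNIV"
  by (simp add: polydisc_expansion_def)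

lemma polydisc_expansion_of_analytic:
  fixes f :: "real^'n::finite \<Rightarrow> real"
  assumes "real_analytic_on f U" "open U" "a \<in> U"
  obtains \<rho> c where "polydisc_expansion f a \<rho> c" "polydisc a \<rho> \<subseteq> U"
proof -
  obtain r c where r: "r > 0" and
    "\<forall>x\<in>ball a r. ((\<lambda>\<alpha>. c \<alpha> * (\<Prod>i\<in>UNIV. (x $ i - a $ i) ^ \<alpha> i)) has_sum f x) UNIV"
    using assms(1,3) unfolding real_analytic_on_def by blast
  hence hs: "\<And>x. x \<in> ball a r \<Longrightarrow> ((\<lambda>\<alpha>. c \<alpha> * multipower (x - a) \<alpha>) has_sum f x) UNIV"
    by (simp add: multipower_def)
  obtain e where e: "e > 0" "ball a e \<subseteq> U" using assms(2,3) open_contains_ball by blast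
  define \<rho> where "\<rho> = min r e / (2 * real CARD('n))"
  have \<rho>: "\<rho> > 0" using r e by (simp add: \<rho>_def)
  have "polydisc a \<rho> \<subseteq> ball a (min r e / 2)"
    using polydisc_subset_ball[of a \<rho>] by (simp add: \<rho>_def)
  moreover have "ball a (min r e / 2) \<subseteq> ball a r" "ball a (min r e / 2) \<subseteq> U" using r e by auto
  ultimately have sub: "polydisc a \<rho> \<subseteq> ball a r" "polydisc a \<rho> \<subseteq> U" by blast+
  have "norm ((\<chi> i. \<rho>) :: real^'n) \<le> real CARD('n) * \<rho>"
    using norm_le_l1_cart[of "(\<chi> i. \<rho>) :: real^'n"] \<rho> by simp
  hence "a + (\<chi> i. \<rho>) \<in> ball a r" using r e by (simp add: dist_norm \<rho>_def)
  from hs[OF this, THEN has_sum_imp_summable]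
  have "(\<lambda>\<alpha>. c \<alpha> * multipower (\<chi> i. \<rho>) \<alpha>) summable_on UNIV" by simp
  hence "(\<lambda>\<alpha>. norm (c \<alpha> * multipower (\<chi> i. \<rho>) \<alpha>)) summable_on UNIV"
    by (rule summable_on_iff_abs_summable_on_real[THEN iffD1])
  moreover have "norm (c \<alpha> * multipower (\<chi> i. \<rho>) \<alpha>) = \<bar>c \<alpha>\<bar> * \<rho> ^ total_degree \<alpha>" for \<alpha>
    using \<rho> by (simp add: multipower_const abs_mult)
  ultimately have "(\<lambda>\<alpha>. \<bar>c \<alpha>\<bar> * \<rho> ^ total_degree \<alpha>) summable_on UNIV" by simp
  hence "polydisc_expansion f a \<rho> c"
    unfolding polydisc_expansion_def using \<rho> hs sub(1) by blast
  with sub show ?thesis using that by blast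
qed

lemma recentered_double_series:
  fixes c :: "('n::finite \<Rightarrow> nat) \<Rightarrow> real"
  assumes L: "polydisc_expansion f a \<rho> c"
    and b: "\<And>i. \<bar>b $ i - a $ i\<bar> + \<tau> \<le> \<rho>" and u: "\<And>i. \<bar>u $ i\<bar> \<le> \<tau>"
  defines "F \<equiv> \<lambda>\<alpha> \<beta>. c \<alpha> * multichoose \<alpha> \<beta> * multipower (b - a) (\<alpha> - \<beta>)"
  shows "((\<lambda>\<beta>. (\<Sum>\<^sub>\<infinity>\<alpha>. F \<alpha> \<beta>) * multipower u \<beta>) has_sum (\<Sum>\<^sub>\<infinity>\<alpha>. c \<alpha> * multipower (u + (b - a)) \<alpha>)) UNIV"
    and "\<And>\<beta>. (\<lambda>\<alpha>. F \<alpha> \<beta> * multipower u \<beta>) summable_on UNIV"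
    and "(\<lambda>\<beta>. \<bar>\<Sum>\<^sub>\<infinity>\<alpha>. F \<alpha> \<beta>\<bar> * \<bar>multipower u \<beta>\<bar>) summable_on UNIV"
proof -
  define G where "G = (\<lambda>\<alpha> \<beta>. F \<alpha> \<beta> * multipower u \<beta>)"
  define w :: "real^'n" where "w = (\<chi> i. \<bar>u $ i\<bar>) + (\<chi> i. \<bar>b $ i - a $ i\<bar>)"
  have cs: "(\<lambda>\<alpha>. \<bar>c \<alpha>\<bar> * \<rho> ^ total_degree \<alpha>) summable_on UNIV"
    using L by (simp add: polydisc_expansion_def)
  have abs_rows: "((\<lambda>\<beta>. \<bar>G \<alpha> \<beta>\<bar>) has_sum \<bar>c \<alpha>\<bar> * multipower w \<alpha>) UNIV" for \<alpha>
  proof -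
    have "\<bar>G \<alpha> \<beta>\<bar> = \<bar>c \<alpha>\<bar> * (multichoose \<alpha> \<beta> * multipower (\<chi> i. \<bar>u $ i\<bar>) \<beta>
             * multipower (\<chi> i. \<bar>b $ i - a $ i\<bar>) (\<alpha> - \<beta>))" for \<beta>
      using multichoose_nonneg[of \<alpha> \<beta>] by (simp add: G_def F_def abs_mult multipower_abs)
    thus ?thesis unfolding w_def by (simp add: has_sum_cmult_right has_sum_multi_binomial)
  qed
  have abs_rows_summable: "(\<lambda>\<alpha>. \<bar>c \<alpha>\<bar> * multipower w \<alpha>) summable_on UNIV"
  proof (rule summable_on_comparison_test[OF cs])
    fix \<alpha>
    have "multipower w \<alpha> \<le> \<rho> ^ total_degree \<alpha>"
      unfolding multipower_const[symmetric]
    proof (rule multipower_mono)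
      fix i show "0 \<le> w $ i \<and> w $ i \<le> (\<chi> i. \<rho>) $ i" using u[of i] b[of i] by (simp add: w_def)
    qed
    thus "\<bar>c \<alpha>\<bar> * multipower w \<alpha> \<le> \<bar>c \<alpha>\<bar> * \<rho> ^ total_degree \<alpha>"
      by (simp add: mult_left_mono)
    show "0 \<le> \<bar>c \<alpha>\<bar> * multipower w \<alpha>"
      by (intro mult_nonneg_nonneg multipower_nonneg) (auto simp: w_def)
  qed
  have rows: "(G \<alpha> has_sum c \<alpha> * multipower (u + (b - a)) \<alpha>) UNIV" for \<alpha>
    using has_sum_cmult_right[where c="c \<alpha>", OF has_sum_multi_binomial[of \<alpha> u "b - a"]]
    by (simp add: G_def F_def ac_simps)
  have cols: "(\<Sum>\<^sub>\<infinity>\<alpha>. G \<alpha> \<beta>) = (\<Sum>\<^sub>\<infinity>\<alpha>. F \<alpha> \<beta>) * multipower u \<beta>" for \<beta>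
    unfolding G_def by (rule infsum_cmult_left')
  note swap = has_sum_swap_abs_summable[OF abs_rows abs_rows_summable]
  show "\<And>\<beta>. (\<lambda>\<alpha>. F \<alpha> \<beta> * multipower u \<beta>) summable_on UNIV"
    using swap(2) by (simp add: G_def)
  show "((\<lambda>\<beta>. (\<Sum>\<^sub>\<infinity>\<alpha>. F \<alpha> \<beta>) * multipower u \<beta>) has_sum (\<Sum>\<^sub>\<infinity>\<alpha>. c \<alpha> * multipower (u + (b - a)) \<alpha>)) UNIV"
    using swap(1) rows[THEN infsumI] cols by simp
  show "(\<lambda>\<beta>. \<bar>\<Sum>\<^sub>\<infinity>\<alpha>. F \<alpha> \<beta>\<bar> * \<bar>multipower u \<beta>\<bar>) summable_on UNIV"
    using swap(3) by (simp add: cols abs_mult)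
qed

lemma polydisc_expansion_recenter:
  fixes c :: "('n::finite \<Rightarrow> nat) \<Rightarrow> real"
  assumes L: "polydisc_expansion f a \<rho> c" and \<tau>: "0 < \<tau>" and b: "\<And>i. \<bar>b $ i - a $ i\<bar> + \<tau> \<le> \<rho>"
  defines "d \<equiv> \<lambda>\<beta>. \<Sum>\<^sub>\<infinity>\<alpha>. c \<alpha> * multichoose \<alpha> \<beta> * multipower (b - a) (\<alpha> - \<beta>)"
  shows "polydisc_expansion f b \<tau> d"
    and "\<And>\<beta>. ((\<lambda>\<alpha>. c \<alpha> * multichoose \<alpha> \<beta> * multipower (b - a) (\<alpha> - \<beta>)) has_sum d \<beta>) UNIV"
proof -
  define t :: "real^'n" where "t = (\<chi> i. \<tau>)"
  have t: "\<And>i. \<bar>t $ i\<bar> \<le> \<tau>" and t_power: "\<And>\<beta>. multipower t \<beta> = \<tau> ^ total_degree \<beta>"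
    using \<tau> by (simp_all add: t_def multipower_const)
  note corner = recentered_double_series[OF L b t]
  show "((\<lambda>\<alpha>. c \<alpha> * multichoose \<alpha> \<beta> * multipower (b - a) (\<alpha> - \<beta>)) has_sum d \<beta>) UNIV" for \<beta>
    using corner(2)[of \<beta>] \<tau> unfolding d_def t_power
    by (simp add: summable_on_cmult_left' has_sum_infsum)
  have "(\<lambda>\<beta>. \<bar>d \<beta>\<bar> * \<tau> ^ total_degree \<beta>) summable_on UNIV"
    using corner(3) \<tau> by (simp add: d_def t_power)
  moreover have "((\<lambda>\<beta>. d \<beta> * multipower (x - b) \<beta>) has_sum f x) UNIV" if x: "x \<in> polydisc b \<tau>" for x
  proof -
    have "x \<in> polydisc a \<rho>"
    proof (unfold polydisc_def, safe)
      fix i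
      have "\<bar>x $ i - b $ i\<bar> < \<tau>" using x by (simp add: polydisc_def)
      thus "\<bar>x $ i - a $ i\<bar> < \<rho>" using b[of i] by linarith
    qed
    hence "(\<Sum>\<^sub>\<infinity>\<alpha>. c \<alpha> * multipower (x - a) \<alpha>) = f x"
      by (intro infsumI polydisc_expansion_has_sum[OF L])
    moreover have "\<And>i. \<bar>(x - b) $ i\<bar> \<le> \<tau>" using x by (simp add: polydisc_def less_imp_le)
    ultimately show ?thesis
      using recentered_double_series(1)[OF L b, of "x - b"] by (simp add: d_def)
  qed
  ultimately show "polydisc_expansion f b \<tau> d" using \<tau> by (simp add: polydisc_expansion_def)
qed

lemma polydisc_expansion_at_center:
  assumes "polydisc_expansion f a \<rho> c"
  shows "f a = c (\<lambda>_. 0)"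
proof -
  have "a \<in> polydisc a \<rho>" using assms by (simp add: polydisc_expansion_def polydisc_def)
  hence "((\<lambda>\<alpha>. c \<alpha> * multipower 0 \<alpha>) has_sum f a) UNIV"
    using polydisc_expansion_has_sum[OF assms] by fastforce
  moreover have "((\<lambda>\<alpha>. c \<alpha> * multipower 0 \<alpha>) has_sum c (\<lambda>_. 0)) UNIV"
    by (rule has_sum_finite_neutralI[where B="{\<lambda>_. 0}"]) (auto simp: multipower_zero)
  ultimately show ?thesis by (rule has_sum_unique)
qed

lemma polydisc_expansion_axis_sums:
  fixes j :: "'n::finite"
  assumes L: "polydisc_expansion f a \<rho> c" and t: "\<bar>t\<bar> < \<rho>"
  shows "(\<lambda>m. c ((\<lambda>_. 0)(j := m)) * t ^ m) sums f (a + t *\<^sub>R axis j 1)"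
proof -
  define e where "e = (\<lambda>m. (\<lambda>_. 0 :: nat)(j := m))"
  define h where "h = (\<lambda>\<alpha>. c \<alpha> * multipower (t *\<^sub>R axis j 1) \<alpha>)"
  have "a + t *\<^sub>R axis j 1 \<in> polydisc a \<rho>"
    using t L by (auto simp: polydisc_def axis_def polydisc_expansion_def)
  hence "(h has_sum f (a + t *\<^sub>R axis j 1)) UNIV"
    using polydisc_expansion_has_sum[OF L] by (fastforce simp: h_def)
  moreover have "h \<alpha> = 0" if "\<alpha> \<notin> range e" for \<alpha>
  proof -
    have "\<alpha> \<noteq> e (\<alpha> j)" using that by blast
    hence "\<not> (\<forall>i. i \<noteq> j \<longrightarrow> \<alpha> i = 0)" by (auto simp: e_def fun_eq_iff split: if_split_asm)
    thus ?thesis by (auto simp: h_def multipower_axis)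
  qed
  ultimately have "(h has_sum f (a + t *\<^sub>R axis j 1)) (range e)"
    by (subst has_sum_cong_neutral[where T=UNIV]) auto
  moreover have "inj e" by (rule injI) (metis e_def fun_upd_same)
  ultimately have "((h \<circ> e) has_sum f (a + t *\<^sub>R axis j 1)) UNIV"
    using has_sum_reindex by blast
  moreover have "h \<circ> e = (\<lambda>m. c ((\<lambda>_. 0)(j := m)) * t ^ m)"
    by (auto simp: h_def e_def multipower_axis fun_eq_iff)
  ultimately show ?thesis by (intro has_sum_imp_sums) simp
qed

lemma polydisc_expansion_partial_at_center:
  fixes j :: "'n::finite"
  assumes L: "polydisc_expansion f a \<rho> c"
  shows "partial f j a = c ((\<lambda>_. 0)(j := 1))"
proof -
  have \<rho>: "0 < \<rho>" using L by (simp add: polydisc_expansion_def)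
  define cc where "cc = (\<lambda>m. c ((\<lambda>_. 0)(j := m)))"
  define \<phi> where "\<phi> = (\<lambda>t. f (a + t *\<^sub>R axis j 1))"
  have sums: "\<And>z. norm z < \<rho> \<Longrightarrow> (\<lambda>n. cc n * z ^ n) sums \<phi> z"
    unfolding cc_def \<phi>_def using polydisc_expansion_axis_sums[OF L] by simp
  have "((\<lambda>z. \<Sum>n. cc n * z ^ n) has_field_derivative (\<Sum>n. diffs cc n * 0 ^ n)) (at 0)"
    by (rule termdiffs_strong'[of \<rho>]) (use sums \<rho> in \<open>auto intro: sums_summable\<close>)
  moreover have "(\<Sum>n. diffs cc n * 0 ^ n) = cc 1" by (simp add: diffs_def)
  moreover have "eventually (\<lambda>z. (\<Sum>n. cc n * z ^ n) = \<phi> z) (nhds 0)"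
  proof -
    have "eventually (\<lambda>z. z \<in> ball 0 \<rho>) (nhds (0::real))"
      using \<rho> by (intro eventually_nhds_in_open) auto
    thus ?thesis by eventually_elim (use sums in \<open>auto simp: sums_iff\<close>)
  qed
  ultimately have "(\<phi> has_field_derivative cc 1) (at 0)"
    by (subst (asm) DERIV_cong_ev[OF refl _ refl]) auto
  thus ?thesis unfolding partial_def \<phi>_def cc_def by (rule DERIV_imp_deriv)
qed

lemma polydisc_expansion_has_sum_partial:
  fixes j :: "'n::finite"
  assumes L: "polydisc_expansion f a \<rho> c" and y: "y \<in> polydisc a \<rho>"
  defines "e \<equiv> (\<lambda>_. 0)(j := 1)"
  shows "((\<lambda>\<alpha>. c \<alpha> * multichoose \<alpha> e * multipower (y - a) (\<alpha> - e)) has_sum partial f j y) UNIV"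
proof -
  define C where "C = (\<lambda>\<beta> \<alpha>. c \<alpha> * multichoose \<alpha> \<beta> * multipower (y - a) (\<alpha> - \<beta>))"
  define d where "d = (\<lambda>\<beta>. \<Sum>\<^sub>\<infinity>\<alpha>. C \<beta> \<alpha>)"
  define M where "M = Max (range (\<lambda>i. \<bar>y $ i - a $ i\<bar>))"
  have bound: "\<bar>y $ i - a $ i\<bar> \<le> M" for i unfolding M_def by (intro Max_ge) auto
  have "M \<in> range (\<lambda>i. \<bar>y $ i - a $ i\<bar>)" unfolding M_def by (intro Max_in) auto
  hence pos: "0 < \<rho> - M" using y by (auto simp: polydisc_def)
  have "\<bar>y $ i - a $ i\<bar> + (\<rho> - M) \<le> \<rho>" for i using bound[of i] by linarith
  note R = polydisc_expansion_recenter[OF L pos this]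
  have "polydisc_expansion f y (\<rho> - M) d" "(C e has_sum d e) UNIV"
    unfolding d_def C_def by (fact R(1), fact R(2))
  thus ?thesis
    using polydisc_expansion_partial_at_center[of f y "\<rho> - M" d j] by (simp add: C_def e_def)
qed

lemma summable_partial_coefficients:
  fixes c :: "('n::finite \<Rightarrow> nat) \<Rightarrow> real"
  assumes \<rho>: "0 < \<rho>" and cs: "(\<lambda>\<alpha>. \<bar>c \<alpha>\<bar> * \<rho> ^ total_degree \<alpha>) summable_on UNIV"
  shows "(\<lambda>\<gamma>. \<bar>of_nat (Suc (\<gamma> j)) * c (\<gamma>(j := Suc (\<gamma> j)))\<bar> * (\<rho> / 2) ^ total_degree \<gamma>) summable_on UNIV"
proof -
  have "inj_on (\<lambda>\<gamma>::'n \<Rightarrow> nat. \<gamma>(j := Suc (\<gamma> j))) UNIV"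
    by (rule inj_on_inverseI[where g="\<lambda>\<alpha>. \<alpha>(j := \<alpha> j - 1)"]) simp
  hence "((\<lambda>\<alpha>. \<bar>c \<alpha>\<bar> * \<rho> ^ total_degree \<alpha>) \<circ> (\<lambda>\<gamma>. \<gamma>(j := Suc (\<gamma> j)))) summable_on UNIV"
    by (rule iffD1[OF summable_on_reindex]) (rule summable_on_subset_banach[OF cs subset_UNIV])
  hence "(\<lambda>\<gamma>. 1 / \<rho> * (\<bar>c (\<gamma>(j := Suc (\<gamma> j)))\<bar> * \<rho> ^ total_degree (\<gamma>(j := Suc (\<gamma> j)))))
           summable_on UNIV"
    unfolding o_def by (rule summable_on_cmult_right)
  thus ?thesis
  proof (rule summable_on_comparison_test)
    fix \<gamma> :: "'n \<Rightarrow> nat"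
    \<comment> \<open>the factor \<open>\<gamma>\<^sub>j + 1\<close> is absorbed by halving the radius: \<open>\<gamma>\<^sub>j + 1 \<le> 2 ^ |\<gamma>|\<close>\<close>
    have "real (Suc (\<gamma> j)) \<le> 2 ^ \<gamma> j"
      using less_exp[of "\<gamma> j"] by (metis Suc_leI of_nat_le_iff of_nat_numeral of_nat_power)
    also have "\<dots> \<le> 2 ^ total_degree \<gamma>" by (intro power_increasing le_total_degree) auto
    finally have "real (Suc (\<gamma> j)) * (\<rho> / 2) ^ total_degree \<gamma> \<le> 2 ^ total_degree \<gamma> * (\<rho> / 2) ^ total_degree \<gamma>"
      using \<rho> by (intro mult_right_mono) auto
    also have "\<dots> = \<rho> ^ total_degree \<gamma>" by (simp add: power_mult_distrib[symmetric])
    finally have "real (Suc (\<gamma> j)) * (\<rho> / 2) ^ total_degree \<gamma> \<le> \<rho> ^ total_degree \<gamma>" .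
    moreover have "1 / \<rho> * \<rho> ^ total_degree (\<gamma>(j := Suc (\<gamma> j))) = \<rho> ^ total_degree \<gamma>"
      using \<rho> by (simp add: total_degree_Suc_upd)
    ultimately have "\<bar>c (\<gamma>(j := Suc (\<gamma> j)))\<bar> * (real (Suc (\<gamma> j)) * (\<rho> / 2) ^ total_degree \<gamma>)
        \<le> \<bar>c (\<gamma>(j := Suc (\<gamma> j)))\<bar> * (1 / \<rho> * \<rho> ^ total_degree (\<gamma>(j := Suc (\<gamma> j))))"
      by (simp add: mult_left_mono)
    thus "\<bar>of_nat (Suc (\<gamma> j)) * c (\<gamma>(j := Suc (\<gamma> j)))\<bar> * (\<rho> / 2) ^ total_degree \<gamma>
        \<le> 1 / \<rho> * (\<bar>c (\<gamma>(j := Suc (\<gamma> j)))\<bar> * \<rho> ^ total_degree (\<gamma>(j := Suc (\<gamma> j))))"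
      by (simp add: abs_mult mult_ac)
  qed (use \<rho> in simp)
qed

lemma polydisc_expansion_partial:
  fixes j :: "'n::finite"
  assumes L: "polydisc_expansion f a \<rho> c"
  shows "polydisc_expansion (partial f j) a (\<rho> / 2) (\<lambda>\<gamma>. of_nat (Suc (\<gamma> j)) * c (\<gamma>(j := Suc (\<gamma> j))))"
proof -
  define e :: "'n \<Rightarrow> nat" where "e = (\<lambda>_. 0)(j := 1)"
  define shift where "shift = (\<lambda>\<gamma>::'n \<Rightarrow> nat. \<gamma>(j := Suc (\<gamma> j)))"
  have \<rho>: "0 < \<rho>" and cs: "(\<lambda>\<alpha>. \<bar>c \<alpha>\<bar> * \<rho> ^ total_degree \<alpha>) summable_on UNIV"
    using L by (simp_all add: polydisc_expansion_def)
  have shift_minus_e: "shift \<gamma> - e = \<gamma>" for \<gamma> by (simp add: shift_def e_def fun_eq_iff)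
  have multichoose_shift: "multichoose (shift \<gamma>) e = of_nat (Suc (\<gamma> j))" for \<gamma>
    using multichoose_unit[of "shift \<gamma>" j] by (simp add: e_def shift_def)
  have "((\<lambda>\<gamma>. of_nat (Suc (\<gamma> j)) * c (shift \<gamma>) * multipower (y - a) \<gamma>) has_sum partial f j y) UNIV"
    if y: "y \<in> polydisc a (\<rho> / 2)" for y
  proof -
    define G where "G = (\<lambda>\<alpha>. c \<alpha> * multichoose \<alpha> e * multipower (y - a) (\<alpha> - e))"
    have "y \<in> polydisc a \<rho>" using y polydisc_mono[of "\<rho> / 2" \<rho> a] \<rho> by auto
    hence "(G has_sum partial f j y) UNIV"
      unfolding G_def e_def by (rule polydisc_expansion_has_sum_partial[OF L])
    moreover have "G \<alpha> = 0" if "\<alpha> \<notin> range shift" for \<alpha>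
    proof -
      have "\<alpha> j = 0"
      proof (rule ccontr)
        assume "\<alpha> j \<noteq> 0"
        hence "\<alpha> = shift (\<alpha> - e)" by (auto simp: shift_def e_def fun_eq_iff)
        with that show False by auto
      qed
      thus ?thesis using multichoose_unit[of \<alpha> j] by (simp add: G_def e_def)
    qed
    ultimately have "(G has_sum partial f j y) (range shift)"
      by (subst has_sum_cong_neutral[where T=UNIV]) auto
    moreover have "inj shift"
      unfolding shift_def by (rule inj_on_inverseI[where g="\<lambda>\<alpha>. \<alpha>(j := \<alpha> j - 1)"]) simp
    ultimately have "(G \<circ> shift has_sum partial f j y) UNIV"
      using has_sum_reindex by blast
    moreover have "G \<circ> shift = (\<lambda>\<gamma>. of_nat (Suc (\<gamma> j)) * c (shift \<gamma>) * multipower (y - a) \<gamma>)"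
      by (simp add: G_def fun_eq_iff shift_minus_e multichoose_shift)
    ultimately show ?thesis by simp
  qed
  thus ?thesis
    using summable_partial_coefficients[OF \<rho> cs] \<rho> unfolding polydisc_expansion_def shift_def by simp
qed

lemma real_analytic_on_partial:
  assumes "real_analytic_on f U" "open U"
  shows "real_analytic_on (partial f j) U"
  unfolding real_analytic_on_def
proof
  fix a assume "a \<in> U"
  then obtain \<rho> c where "polydisc_expansion f a \<rho> c"
    using polydisc_expansion_of_analytic[OF assms] by blast
  hence L: "polydisc_expansion (partial f j) a (\<rho> / 2) (\<lambda>\<gamma>. of_nat (Suc (\<gamma> j)) * c (\<gamma>(j := Suc (\<gamma> j))))"
    by (rule polydisc_expansion_partial)
  show "\<exists>r>0. \<exists>c. \<forall>x\<in>ball a r.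
      ((\<lambda>\<alpha>. c \<alpha> * (\<Prod>i\<in>UNIV. (x $ i - a $ i) ^ \<alpha> i)) has_sum partial f j x) UNIV"
  proof (intro exI conjI ballI)
    show "0 < \<rho> / 2" using L by (simp add: polydisc_expansion_def)
    fix x assume "x \<in> ball a (\<rho> / 2)"
    with ball_subset_polydisc have "x \<in> polydisc a (\<rho> / 2)" by blast
    from polydisc_expansion_has_sum[OF L this]
    show "((\<lambda>\<alpha>. of_nat (Suc (\<alpha> j)) * c (\<alpha>(j := Suc (\<alpha> j))) * (\<Prod>i\<in>UNIV. (x $ i - a $ i) ^ \<alpha> i))
        has_sum partial f j x) UNIV"
      by (simp add: multipower_def)
  qed
qed

lemma polydisc_expansion_deviation:
  assumes L: "polydisc_expansion f a \<rho> c"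
    and \<delta>: "0 \<le> \<delta>" "\<delta> < \<rho>" and x: "\<And>i. \<bar>x $ i - a $ i\<bar> \<le> \<delta>"
  shows "\<bar>f x - f a\<bar> \<le> (\<Sum>\<^sub>\<infinity>\<alpha>. \<bar>c \<alpha>\<bar> * \<rho> ^ total_degree \<alpha>) * (\<delta> / \<rho>)"
proof -
  have \<rho>: "0 < \<rho>" and cs: "(\<lambda>\<alpha>. \<bar>c \<alpha>\<bar> * \<rho> ^ total_degree \<alpha>) summable_on UNIV"
    using L by (simp_all add: polydisc_expansion_def)
  define z :: "'a \<Rightarrow> nat" where "z = (\<lambda>_. 0)"
  have "x \<in> polydisc a \<rho>" using x \<delta> by (auto simp: polydisc_def intro: le_less_trans)
  hence "((\<lambda>\<alpha>. c \<alpha> * multipower (x - a) \<alpha>) has_sum f x) UNIV"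
    by (rule polydisc_expansion_has_sum[OF L])
  moreover have "((\<lambda>\<alpha>. if \<alpha> = z then c z else 0) has_sum f a) UNIV"
    by (rule has_sum_finite_neutralI[where B="{z}"])
       (auto simp: z_def polydisc_expansion_at_center[OF L])
  ultimately have "((\<lambda>\<alpha>. c \<alpha> * multipower (x - a) \<alpha> + - (if \<alpha> = z then c z else 0))
      has_sum f x + - f a) UNIV"
    by (intro has_sum_add has_sum_uminusI)
  moreover have "((\<lambda>\<alpha>. \<bar>c \<alpha>\<bar> * \<rho> ^ total_degree \<alpha> * (\<delta> / \<rho>)) has_sum
      (\<Sum>\<^sub>\<infinity>\<alpha>. \<bar>c \<alpha>\<bar> * \<rho> ^ total_degree \<alpha>) * (\<delta> / \<rho>)) UNIV"
    by (intro has_sum_cmult_left has_sum_infsum cs)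
  moreover have "norm (c \<alpha> * multipower (x - a) \<alpha> + - (if \<alpha> = z then c z else 0))
      \<le> \<bar>c \<alpha>\<bar> * \<rho> ^ total_degree \<alpha> * (\<delta> / \<rho>)" for \<alpha>
  proof (cases "\<alpha> = z")
    case True
    thus ?thesis using \<rho> \<delta> by (simp add: z_def multipower_def)
  next
    case False
    hence "total_degree \<alpha> \<noteq> 0" by (simp add: z_def total_degree_eq_0_iff)
    hence "1 \<le> total_degree \<alpha>" by simp
    hence "(\<delta> / \<rho>) ^ total_degree \<alpha> \<le> (\<delta> / \<rho>) ^ 1"
      using \<rho> \<delta> by (intro power_decreasing) auto
    hence "\<delta> ^ total_degree \<alpha> \<le> (\<delta> / \<rho>) * \<rho> ^ total_degree \<alpha>"
      using \<rho> by (simp add: power_divide divide_le_eq)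
    hence "\<bar>multipower (x - a) \<alpha>\<bar> \<le> (\<delta> / \<rho>) * \<rho> ^ total_degree \<alpha>"
      using abs_multipower_le[of "x - a" \<delta> \<alpha>] x by simp
    hence "\<bar>c \<alpha>\<bar> * \<bar>multipower (x - a) \<alpha>\<bar> \<le> \<bar>c \<alpha>\<bar> * ((\<delta> / \<rho>) * \<rho> ^ total_degree \<alpha>)"
      by (intro mult_left_mono) auto
    thus ?thesis using False by (simp add: abs_mult ac_simps)
  qed
  ultimately have "norm (f x + - f a) \<le> (\<Sum>\<^sub>\<infinity>\<alpha>. \<bar>c \<alpha>\<bar> * \<rho> ^ total_degree \<alpha>) * (\<delta> / \<rho>)"
    by (rule norm_infsum_le)
  thus ?thesis by simp
qed

lemma isCont_polydisc_expansion:
  assumes L: "polydisc_expansion f a \<rho> c"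
  shows "isCont f a"
  unfolding continuous_at_eps_delta
proof (intro allI impI)
  fix e :: real assume e: "0 < e"
  define K where "K = (\<Sum>\<^sub>\<infinity>\<alpha>. \<bar>c \<alpha>\<bar> * \<rho> ^ total_degree \<alpha>)"
  have \<rho>: "0 < \<rho>" using L by (simp add: polydisc_expansion_def)
  have K: "0 \<le> K" unfolding K_def using \<rho> by (intro infsum_nonneg) auto
  define \<delta> where "\<delta> = min (\<rho> / 2) (e * \<rho> / (2 * (K + 1)))"
  have \<delta>: "0 < \<delta>" "\<delta> < \<rho>" using \<rho> e K by (auto simp: \<delta>_def)
  have "\<delta> / \<rho> \<le> (e * \<rho> / (2 * (K + 1))) / \<rho>"
    using \<rho> by (intro divide_right_mono) (auto simp: \<delta>_def)
  also have "\<dots> = e / (2 * (K + 1))" using \<rho> by simp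
  finally have "K * (\<delta> / \<rho>) \<le> K * (e / (2 * (K + 1)))"
    using K by (rule mult_left_mono)
  also have "\<dots> < e" using K e by (simp add: field_simps add_nonneg_pos)
  finally have small: "K * (\<delta> / \<rho>) < e" .
  show "\<exists>d>0. \<forall>x. dist x a < d \<longrightarrow> dist (f x) (f a) < e"
  proof (intro exI conjI allI impI)
    fix x assume x: "dist x a < \<delta>"
    have "\<bar>x $ i - a $ i\<bar> \<le> \<delta>" for i
      using component_le_norm_cart[of "x - a" i] x by (simp add: dist_norm)
    hence "\<bar>f x - f a\<bar> \<le> K * (\<delta> / \<rho>)"
      unfolding K_def using \<delta> by (intro polydisc_expansion_deviation[OF L]) auto
    thus "dist (f x) (f a) < e" using small by (simp add: dist_real_def)
  qed (rule \<delta>(1))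
qed

lemma real_analytic_on_imp_isCont:
  "real_analytic_on f U \<Longrightarrow> open U \<Longrightarrow> a \<in> U \<Longrightarrow> isCont f a"
  by (metis polydisc_expansion_of_analytic isCont_polydisc_expansion)

lemma powser_vanishing_near_0:
  fixes P :: "nat \<Rightarrow> real"
  assumes R: "0 < R" and sums: "\<And>t. \<bar>t\<bar> < R \<Longrightarrow> (\<lambda>n. P n * t ^ n) sums \<phi> t"
    and d: "0 < d" and zero: "\<And>t. \<bar>t\<bar> < d \<Longrightarrow> \<phi> t = 0"
  shows "P m = 0"
proof (cases "m = 0")
  case True
  from sums[of 0] R have "P 0 = \<phi> 0" by (simp add: sums_iff)
  with zero[of 0] d True show ?thesis by simp
next
  case False
  show ?thesis
  proof (rule ccontr)
    assume "P m \<noteq> 0"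
    moreover have "\<phi> 0 = 0" using zero d by simp
    ultimately obtain s where s: "0 < s" and nonzero: "\<And>w. w \<in> cball 0 s - {0} \<Longrightarrow> \<phi> w \<noteq> 0"
      using powser_0_nonzero[where a=P and \<xi>=0 and f=\<phi> and m=m] R sums False by auto
    have "min s (d / 2) \<in> cball 0 s - {0}" using s d by auto
    moreover have "\<phi> (min s (d / 2)) = 0" using s d by (intro zero) auto
    ultimately show False using nonzero by blast
  qed
qed

lemma polydisc_expansion_homogeneous_sums:
  assumes L: "polydisc_expansion f a \<rho> c" and x: "x \<in> polydisc a \<rho>"
  shows "(\<lambda>n. \<Sum>\<alpha> | total_degree \<alpha> = n. c \<alpha> * multipower (x - a) \<alpha>) sums f x"
proof -
  define D where "D = (\<lambda>n. {\<alpha> :: 'a \<Rightarrow> nat. total_degree \<alpha> = n})"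
  define h where "h = (\<lambda>\<alpha>. c \<alpha> * multipower (x - a) \<alpha>)"
  have "(h has_sum f x) UNIV" unfolding h_def by (rule polydisc_expansion_has_sum[OF L x])
  moreover have "(h has_sum f x) UNIV = ((\<lambda>(n, \<alpha>). h \<alpha>) has_sum f x) (Sigma UNIV D)"
    by (rule has_sum_reindex_bij_witness[where i=snd and j="\<lambda>\<alpha>. (total_degree \<alpha>, \<alpha>)"])
       (auto simp: D_def)
  moreover have "(h has_sum (\<Sum>\<alpha>\<in>D n. h \<alpha>)) (D n)" for n
    unfolding D_def by (intro has_sum_finite finite_total_degree_eq)
  ultimately have "((\<lambda>n. \<Sum>\<alpha>\<in>D n. h \<alpha>) has_sum f x) UNIV"
    using has_sum_SigmaD[where f="\<lambda>(n, \<alpha>). h \<alpha>" and A=UNIV and B=D] by simp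
  thus ?thesis unfolding D_def h_def by (rule has_sum_imp_sums)
qed

lemma polydisc_expansion_eq_0:
  assumes L: "polydisc_expansion f a \<rho> c"
    and e: "0 < e" and zero: "\<And>y. y \<in> ball a e \<Longrightarrow> f y = 0" and x: "x \<in> polydisc a \<rho>"
  shows "f x = 0"
proof -
  define v where "v = x - a"
  define P where "P = (\<lambda>n. \<Sum>\<alpha> | total_degree \<alpha> = n. c \<alpha> * multipower v \<alpha>)"
  define M where "M = Max (range (\<lambda>i. \<bar>v $ i\<bar>))"
  have M: "\<bar>v $ i\<bar> \<le> M" for i unfolding M_def by (intro Max_ge) auto
  have "M \<in> range (\<lambda>i. \<bar>v $ i\<bar>)" unfolding M_def by (intro Max_in) auto
  hence M\<rho>: "M < \<rho>" "0 \<le> M" using x by (auto simp: polydisc_def v_def)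
  have \<rho>: "0 < \<rho>" using L by (simp add: polydisc_expansion_def)
  \<comment> \<open>along the line through \<open>a\<close> and \<open>x\<close>, \<open>f\<close> is a power series of radius \<open>> 1\<close>\<close>
  define R where "R = 2 * \<rho> / (\<rho> + M)"
  have R: "1 < R" "R * M < \<rho>" using M\<rho> \<rho> by (simp_all add: R_def field_simps)
  have sums: "(\<lambda>n. P n * t ^ n) sums f (a + t *\<^sub>R v)" if t: "\<bar>t\<bar> < R" for t
  proof -
    have "\<bar>t * v $ i\<bar> < \<rho>" for i
    proof -
      have "\<bar>t * v $ i\<bar> \<le> R * M" unfolding abs_mult using t M[of i] M\<rho> by (intro mult_mono) auto
      thus ?thesis using R by linarith
    qed
    hence "a + t *\<^sub>R v \<in> polydisc a \<rho>" by (simp add: polydisc_def)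
    from polydisc_expansion_homogeneous_sums[OF L this]
    show ?thesis by (simp add: P_def multipower_scaleR sum_distrib_left sum_distrib_right ac_simps)
  qed
  have small: "f (a + t *\<^sub>R v) = 0" if t: "\<bar>t\<bar> < e / (norm v + 1)" for t
  proof (rule zero)
    have "\<bar>t\<bar> * norm v \<le> \<bar>t\<bar> * (norm v + 1)" by (simp add: mult_left_mono)
    also have "\<dots> < e" using t by (simp add: field_simps add_pos_nonneg)
    finally show "a + t *\<^sub>R v \<in> ball a e" by (simp add: dist_norm)
  qed
  have "0 < e / (norm v + 1)" using e by (simp add: add_nonneg_pos)
  hence "P n = 0" for n
    using R(1) by (intro powser_vanishing_near_0[OF _ sums _ small]) auto
  with sums[of 1] R(1) show ?thesis by (simp add: v_def sums_iff)
qed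

lemma polydisc_expansion_vanishing_spreads:
  assumes L: "polydisc_expansion f a \<rho> c"
    and x: "x \<in> polydisc a (\<rho> / 4)" and y: "y \<in> polydisc a (\<rho> / 4)"
    and r: "0 < r" "\<And>w. w \<in> ball x r \<Longrightarrow> f w = 0"
  shows "\<exists>s>0. \<forall>w\<in>ball y s. f w = 0"
proof -
  have \<rho>: "0 < \<rho>" using L by (simp add: polydisc_expansion_def)
  \<comment> \<open>re-expanding about \<open>x\<close>, the expansion still reaches \<open>y\<close>\<close>
  have "\<bar>x $ i - a $ i\<bar> + \<rho> / 2 \<le> \<rho>" for i
  proof -
    have "\<bar>x $ i - a $ i\<bar> < \<rho> / 4" using x by (simp add: polydisc_def)
    thus ?thesis by linarith
  qed
  hence Lx: "polydisc_expansion f x (\<rho> / 2)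
      (\<lambda>\<beta>. \<Sum>\<^sub>\<infinity>\<alpha>. c \<alpha> * multichoose \<alpha> \<beta> * multipower (x - a) (\<alpha> - \<beta>))"
    using \<rho> by (intro polydisc_expansion_recenter(1)[OF L]) auto
  have "y \<in> polydisc x (\<rho> / 2)"
  proof (unfold polydisc_def, safe)
    fix i
    have "\<bar>y $ i - a $ i\<bar> < \<rho> / 4" "\<bar>x $ i - a $ i\<bar> < \<rho> / 4"
      using x y by (simp_all add: polydisc_def)
    thus "\<bar>y $ i - x $ i\<bar> < \<rho> / 2" by linarith
  qed
  then obtain s where "0 < s" "ball y s \<subseteq> polydisc x (\<rho> / 2)"
    using open_polydisc open_contains_ball by blast
  thus ?thesis using polydisc_expansion_eq_0[OF Lx r] by blast
qed

lemma real_analytic_on_eq_0: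
  assumes A: "real_analytic_on f U" and U: "open U" "connected U"
    and x0: "x0 \<in> U" and e: "0 < e" and zero: "\<And>y. y \<in> ball x0 e \<Longrightarrow> f y = 0"
    and x: "x \<in> U"
  shows "f x = 0"
proof -
  let ?vanishes_near = "\<lambda>x. \<exists>r>0. \<forall>y\<in>ball x r. f y = 0"
  have "?vanishes_near x"
  proof (rule connected_induction_simple[OF U(2) x0 x])
    show "?vanishes_near x0" using e zero by blast
    fix a assume "a \<in> U"
    then obtain \<rho> c where L: "polydisc_expansion f a \<rho> c" and sub: "polydisc a \<rho> \<subseteq> U"
      using polydisc_expansion_of_analytic[OF A U(1)] by blast
    have \<rho>: "0 < \<rho>" using L by (simp add: polydisc_expansion_def)
    show "\<exists>T. openin (top_of_set U) T \<and> a \<in> T \<and> (\<forall>x\<in>T. \<forall>y\<in>T. ?vanishes_near x \<longrightarrow> ?vanishes_near y)"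
    proof (rule exI[of _ "polydisc a (\<rho> / 4)"], intro conjI ballI impI)
      have "polydisc a (\<rho> / 4) \<subseteq> U" using sub polydisc_mono[of "\<rho> / 4" \<rho> a] \<rho> by auto
      thus "openin (top_of_set U) (polydisc a (\<rho> / 4))"
        using open_polydisc by (rule open_subset)
      show "a \<in> polydisc a (\<rho> / 4)" using \<rho> by (simp add: polydisc_def)
      fix x y assume "x \<in> polydisc a (\<rho> / 4)" "y \<in> polydisc a (\<rho> / 4)" "?vanishes_near x"
      thus "?vanishes_near y" using polydisc_expansion_vanishing_spreads[OF L] by blast
    qed
  qed
  then obtain r where "0 < r" "\<forall>y\<in>ball x r. f y = 0" by blast
  thus ?thesis by simp
qed

lemma real_analytic_on_mult_eq_0:
  assumes U: "open U" "connected U" and p: "real_analytic_on p U" and q: "real_analytic_on q U"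
    and zero: "\<forall>x\<in>U. p x * q x = 0"
  shows "(\<forall>x\<in>U. p x = 0) \<or> (\<forall>x\<in>U. q x = 0)"
proof (rule disjCI)
  assume "\<not> (\<forall>x\<in>U. q x = 0)"
  show "\<forall>x\<in>U. p x = 0"
  proof (rule ccontr)
    assume "\<not> (\<forall>x\<in>U. p x = 0)"
    then obtain x0 where x0: "x0 \<in> U" "p x0 \<noteq> 0" by blast
    obtain \<epsilon> where \<epsilon>: "0 < \<epsilon>" "\<And>y. dist x0 y < \<epsilon> \<Longrightarrow> p y \<noteq> 0"
      using continuous_at_avoid[OF real_analytic_on_imp_isCont[OF p U(1) x0(1)] x0(2)] by blast
    obtain r where r: "0 < r" "ball x0 r \<subseteq> U" using U(1) x0(1) open_contains_ball by blast
    have "q y = 0" if "y \<in> ball x0 (min \<epsilon> r)" for y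
    proof -
      have "y \<in> U" "p y \<noteq> 0" using that r(2) \<epsilon>(2) by auto
      thus ?thesis using zero by auto
    qed
    moreover have "0 < min \<epsilon> r" using \<epsilon>(1) r(1) by simp
    ultimately show False
      using real_analytic_on_eq_0[OF q U x0(1), of "min \<epsilon> r"] \<open>\<not> (\<forall>x\<in>U. q x = 0)\<close> by blast
  qed
qed

lemma dep_rel_trans:
  assumes no_zero_divisors: "\<And>a b c d. \<forall>x\<in>U. partial (g a) b x * partial (g c) d x = 0 \<Longrightarrow>
      (\<forall>x\<in>U. partial (g a) b x = 0) \<or> (\<forall>x\<in>U. partial (g c) d x = 0)"
    and relation: "\<And>i j k x. x \<in> U \<Longrightarrow> i \<noteq> j \<Longrightarrow> j \<noteq> k \<Longrightarrow> i \<noteq> k \<Longrightarrow>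
      partial (g i) j x * partial (g k) i x + partial (g k) j x * partial (g j) i x
      - partial (g k) j x * partial (g k) i x = 0"
    and ij: "dep_rel g U i j" and jk: "dep_rel g U j k"
  shows "dep_rel g U i k"
proof (cases "i = j \<or> j = k \<or> i = k")
  case True
  thus ?thesis using ij jk by (auto simp: dep_rel_def)
next
  case False
  show ?thesis
  proof (rule ccontr)
    assume "\<not> dep_rel g U i k"
    hence "\<forall>x\<in>U. partial (g k) i x = 0" by (simp add: dep_rel_def)
    hence "\<forall>x\<in>U. partial (g k) j x * partial (g j) i x = 0"
      using relation False by fastforce
    with no_zero_divisors False ij jk show False by (fastforce simp: dep_rel_def)
  qed
qed

lemma dep_rel_comparable:
  assumes no_zero_divisors: "\<And>a b c d. \<forall>x\<in>U. partial (g a) b x * partial (g c) d x = 0 \<Longrightarrow>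
      (\<forall>x\<in>U. partial (g a) b x = 0) \<or> (\<forall>x\<in>U. partial (g c) d x = 0)"
    and relation: "\<And>i j k x. x \<in> U \<Longrightarrow> i \<noteq> j \<Longrightarrow> j \<noteq> k \<Longrightarrow> i \<noteq> k \<Longrightarrow>
      partial (g i) j x * partial (g k) i x + partial (g k) j x * partial (g j) i x
      - partial (g k) j x * partial (g k) i x = 0"
    and ik: "dep_rel g U i k" and jk: "dep_rel g U j k"
  shows "dep_rel g U i j \<or> dep_rel g U j i"
proof (cases "i = j \<or> j = k \<or> i = k")
  case True
  thus ?thesis using ik jk by (auto simp: dep_rel_def)
next
  case False
  show ?thesis
  proof (rule ccontr)
    assume "\<not> (dep_rel g U i j \<or> dep_rel g U j i)"
    hence "\<forall>x\<in>U. partial (g j) i x = 0" "\<forall>x\<in>U. partial (g i) j x = 0"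
      by (auto simp: dep_rel_def)
    hence "\<forall>x\<in>U. partial (g k) j x * partial (g k) i x = 0"
      using relation False by fastforce
    with no_zero_divisors False ik jk show False by (fastforce simp: dep_rel_def)
  qed
qed

theorem lemma2p1:
  fixes g :: "'n::finite \<Rightarrow> real^'n \<Rightarrow> real" and U :: "(real^'n) set"
  assumes "open U" and "connected U"
    and "\<And>i. real_analytic_on (g i) U"
    and "\<And>i j k x. x \<in> U \<Longrightarrow> i \<noteq> j \<Longrightarrow> j \<noteq> k \<Longrightarrow> i \<noteq> k \<Longrightarrow>
           partial (g i) j x * partial (g k) i x + partial (g k) j x * partial (g j) i x
           - partial (g k) j x * partial (g k) i x = 0"
  shows "(\<forall>i j k. dep_rel g U i j \<and> dep_rel g U j k \<longrightarrow> dep_rel g U i k)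
     \<and> (\<forall>k i j. dep_rel g U i k \<and> dep_rel g U j k \<longrightarrow> dep_rel g U i j \<or> dep_rel g U j i)"
proof -
  have analytic: "real_analytic_on (partial (g i) j) U" for i j
    using real_analytic_on_partial[OF assms(3) assms(1)] .
  have no_zero_divisors: "(\<forall>x\<in>U. partial (g a) b x = 0) \<or> (\<forall>x\<in>U. partial (g c) d x = 0)"
    if "\<forall>x\<in>U. partial (g a) b x * partial (g c) d x = 0" for a b c d
    using real_analytic_on_mult_eq_0[OF assms(1,2) analytic analytic that] .
  show ?thesis
    using dep_rel_trans[OF no_zero_divisors assms(4)] dep_rel_comparable[OF no_zero_divisors assms(4)]
    by blast
qed

end
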